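(* For $n\ge0$ and $k\in\mathbb Z$, $S_{n,k}(x)=A^\star_{n,k}(x+1)$, where for $k<n$ this holds for $|x|<1$ (as convergent power series); for $k\ge n$, $S_{n,k}$ is a polynomial. For all $n,k\ge\ell\ge0$, $$[x^\ell]\,S_{n,k}(x)=\frac{1}{\ell!}\frac{d^\ell}{dx^\ell}A^\star_{n,k}(x)\Big|_{x=1}=\sum_{\nu=0}^{\ell}\binom{k-n}{\ell-\nu}s_{n,\nu}.$$ If (R) holds and $k\ge n\ge0$, then $S_{n,k}$ is quasi-palindromic: $S_{n,k}(x)=(-1)^nx^kS_{n,k}(x^{-1})$. If moreover $n$ is odd and $k$ is even, then $[x^{k/2}]\,S_{n,k}(x)=0$.
   Context: Let $(\alpha_n)_{n\ge0}$ be an arbitrary sequence of complex numbers; its Appell polynomials are $A_n(x)=\sum_{\nu=0}^{n}\binom{n}{\nu}\alpha_{n-\nu}x^\nu$. For $n\ge0,k\in\mathbb Z$ let $A^\star_{n,k}(x)=x^kA_n(x^{-1})$. Let $s_{n,k}=\sum_{\nu=k}^{n}\binom{n}{\nu}\binom{\nu}{k}\alpha_\nu$ ($0\le k\le n$), $S_n(x)=\sum_{k=0}^n s_{n,k}x^k$, and define the formal power series $S_{n,k}(x)=S_n(x)(x+1)^{k-n}=S_n(x)\sum_{\nu\ge0}\binom{k-n}{\nu}x^\nu$ for $n\ge0$, $k\in\mathbb Z$ (generalized binomial coefficients). $[x^\ell]f(x)$ denotes the coefficient of $x^\ell$. Property (R) means $A_n(1-x)=(-1)^nA_n(x)$ for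 all $n\ge0$. *)

theory Defs
  imports "HOL-Analysis.Analysis" "HOL-Computational_Algebra.Computational_Algebra"
begin

definition A :: "(nat \<Rightarrow> complex) \<Rightarrow> nat \<Rightarrow> complex \<Rightarrow> complex" where
  "A \<alpha> n x = (\<Sum>\<nu>\<le>n. of_nat (n choose \<nu>) * \<alpha> (n - \<nu>) * x ^ \<nu>)"

definition A_star :: "(nat \<Rightarrow> complex) \<Rightarrow> nat \<Rightarrow> int \<Rightarrow> complex \<Rightarrow> complex" where
  "A_star \<alpha> n k x = x powi k * A \<alpha> n (inverse x)"

definition s :: "(nat \<Rightarrow> complex) \<Rightarrow> nat \<Rightarrow> nat \<Rightarrow> complex" where
  "s \<alpha> n k = (\<Sum>\<nu>=k..n. of_nat (n choose \<nu>) * of_nat (\<nu> choose k) * \<alpha> \<nu>)"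

definition S_poly :: "(nat \<Rightarrow> complex) \<Rightarrow> nat \<Rightarrow> complex poly" where
  "S_poly \<alpha> n = (\<Sum>k\<le>n. monom (s \<alpha> n k) k)"

definition S_fps :: "(nat \<Rightarrow> complex) \<Rightarrow> nat \<Rightarrow> int \<Rightarrow> complex fps" where
  "S_fps \<alpha> n k = fps_of_poly (S_poly \<alpha> n) * fps_binomial (of_int (k - int n))"

definition prop_R :: "(nat \<Rightarrow> complex) \<Rightarrow> bool" where
  "prop_R \<alpha> \<longleftrightarrow> (\<forall>n x. A \<alpha> n (1 - x) = (-1) ^ n * A \<alpha> n x)"

end

theory Submission
  imports Defs
begin

text \<open>Expanding \<open>(x + 1)^\<nu>\<close> in \<open>S_n(x)\<close> gives \<open>S_n(w - 1) = \<Sum>\<^sub>\<nu> C(n,\<nu>) \<alpha>_\<nu> w^\<nu> = w^n A_n(1/w)\<close>,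
  so \<open>A*_{n,k}(x + 1) = S_n(x) (x + 1)^(k-n)\<close>. Thus \<open>S_{n,k}\<close> is the Taylor series of \<open>A*_{n,k}\<close>
  at 1, convergent for \<open>|x| < 1\<close>, and its coefficients are the Cauchy product of the two
  factors. For \<open>k = n + m\<close> the binomial factor is the polynomial \<open>(1 + x)^m\<close>. The map
  \<open>x \<mapsto> 1/x\<close> sends \<open>1/(x + 1)\<close> to \<open>1 - 1/(x + 1)\<close>, so (R) yields the quasi-palindromic identity
  off the finite set \<open>{0, -1}\<close>, hence as polynomials; for odd \<open>n\<close> the middle coefficient then
  equals its own negative.\<close>

lemma poly_eqI_cofinite:
  fixes p q :: "'a::{idom, ring_char_0} poly"
  assumes "finite {x. poly p x \<noteq> poly q x}"
  shows "p = q"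
proof (rule ccontr)
  assume "p \<noteq> q"
  then have "finite {x. poly (p - q) x = 0}"
    by (intro poly_roots_finite) simp
  moreover have "UNIV = {x. poly p x \<noteq> poly q x} \<union> {x. poly (p - q) x = 0}"
    by auto
  ultimately have "finite (UNIV :: 'a set)"
    using assms by (metis finite_UnI)
  then show False
    using infinite_UNIV_char_0 by blast
qed

text \<open>Unlike \<^const>\<open>reflect_poly\<close>, the reversal is taken with respect to a prescribed degree
  bound \<open>K\<close>, not the actual degree.\<close>
definition reciprocal_poly :: "nat \<Rightarrow> 'a::comm_monoid_add poly \<Rightarrow> 'a poly" where
  "reciprocal_poly K p = (\<Sum>i\<le>K. monom (coeff p (K - i)) i)"

lemma coeff_reciprocal_poly:
  "i \<le> K \<Longrightarrow> coeff (reciprocal_poly K p) i = coeff p (K - i)"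
  by (simp add: reciprocal_poly_def coeff_sum coeff_monom)

lemma poly_reciprocal_poly:
  fixes p :: "'a::field poly"
  assumes "degree p \<le> K" "x \<noteq> 0"
  shows "poly (reciprocal_poly K p) x = x ^ K * poly p (inverse x)"
proof -
  have "poly p (inverse x) = (\<Sum>j\<le>K. coeff p j * inverse x ^ j)"
    unfolding poly_altdef using assms(1)
    by (intro sum.mono_neutral_left) (auto simp: coeff_eq_0)
  then have "x ^ K * poly p (inverse x) = (\<Sum>j=0..K. x ^ K * (coeff p j * inverse x ^ j))"
    by (simp add: sum_distrib_left atMost_atLeast0)
  also have "\<dots> = (\<Sum>j=0..K. coeff p j * x ^ (K - j))"
    using assms(2) by (intro sum.cong refl) (auto simp: power_diff power_inverse field_simps)
  also have "\<dots> = (\<Sum>j=0..K. coeff p (K - j) * x ^ (K - (K - j)))"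
    by (subst sum.atLeastAtMost_rev) simp
  also have "\<dots> = poly (reciprocal_poly K p) x"
    by (simp add: reciprocal_poly_def poly_sum poly_monom atMost_atLeast0)
  finally show ?thesis ..
qed

lemma eq_smult_reciprocal_polyI_cofinite:
  fixes p :: "'a::field_char_0 poly"
  assumes "degree p \<le> K" "finite E"
    and "\<And>x. x \<noteq> 0 \<Longrightarrow> x \<notin> E \<Longrightarrow> poly p x = c * x ^ K * poly p (inverse x)"
  shows "p = smult c (reciprocal_poly K p)"
proof (rule poly_eqI_cofinite)
  have "poly p x = poly (smult c (reciprocal_poly K p)) x" if "x \<notin> insert 0 E" for x
    using that assms(3)[of x] poly_reciprocal_poly[OF assms(1), of x] by (simp add: mult.assoc)
  then have "{x. poly p x \<noteq> poly (smult c (reciprocal_poly K p)) x} \<subseteq> insert 0 E"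
    by blast
  then show "finite {x. poly p x \<noteq> poly (smult c (reciprocal_poly K p)) x}"
    using assms(2) by (rule finite_subset[OF _ finite_insert[THEN iffD2]])
qed

lemma poly_eq_smult_reciprocal_poly:
  fixes p :: "'a::field poly"
  assumes "p = smult c (reciprocal_poly K p)" "degree p \<le> K" "x \<noteq> 0"
  shows "poly p x = c * x ^ K * poly p (inverse x)"
  using poly_reciprocal_poly[OF assms(2,3)] by (subst assms(1)) (simp add: mult.assoc)

lemma coeff_middle_eq_0_if_anti_reciprocal:
  fixes p :: "'a::field_char_0 poly"
  assumes "p = - reciprocal_poly K p" "even K"
  shows "coeff p (K div 2) = 0"
proof -
  have "K - K div 2 = K div 2"
    using assms(2) by (elim evenE) simp
  then have "coeff p (K div 2) = - coeff p (K div 2)"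
    by (subst assms(1)) (simp add: coeff_reciprocal_poly)
  then show ?thesis
    by simp
qed

lemma poly_S_poly:
  "poly (S_poly \<alpha> n) z = (\<Sum>\<nu>\<le>n. of_nat (n choose \<nu>) * \<alpha> \<nu> * (z + 1) ^ \<nu>)"
proof -
  have s_atMost: "s \<alpha> n k = (\<Sum>\<nu>\<le>n. of_nat (n choose \<nu>) * of_nat (\<nu> choose k) * \<alpha> \<nu>)" for k
    unfolding s_def by (rule sum.mono_neutral_left) auto
  have binomial_upto_n: "(\<Sum>k\<le>n. of_nat (\<nu> choose k) * z ^ k) = (z + 1) ^ \<nu>" if "\<nu> \<le> n" for \<nu>
  proof -
    have "(\<Sum>k\<le>n. of_nat (\<nu> choose k) * z ^ k) = (\<Sum>k\<le>\<nu>. of_nat (\<nu> choose k) * z ^ k)"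
      using that by (intro sum.mono_neutral_right) auto
    then show ?thesis
      by (simp add: binomial_ring)
  qed
  have "poly (S_poly \<alpha> n) z = (\<Sum>k\<le>n. s \<alpha> n k * z ^ k)"
    by (simp add: S_poly_def poly_sum poly_monom)
  also have "\<dots> = (\<Sum>k\<le>n. \<Sum>\<nu>\<le>n. of_nat (n choose \<nu>) * \<alpha> \<nu> * (of_nat (\<nu> choose k) * z ^ k))"
    by (intro sum.cong refl) (simp add: s_atMost sum_distrib_left sum_distrib_right mult_ac)
  also have "\<dots> = (\<Sum>\<nu>\<le>n. of_nat (n choose \<nu>) * \<alpha> \<nu> * (\<Sum>k\<le>n. of_nat (\<nu> choose k) * z ^ k))"
    by (subst sum.swap) (simp add: sum_distrib_left)
  also have "\<dots> = (\<Sum>\<nu>\<le>n. of_nat (n choose \<nu>) * \<alpha> \<nu> * (z + 1) ^ \<nu>)"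
    by (intro sum.cong refl) (simp add: binomial_upto_n)
  finally show ?thesis .
qed

lemma A_star_eq_poly_S_poly:
  assumes "w \<noteq> 0"
  shows "A_star \<alpha> n k w = poly (S_poly \<alpha> n) (w - 1) * w powi (k - int n)"
proof -
  have "A_star \<alpha> n k w = (\<Sum>\<nu>=0..n. w powi k * (of_nat (n choose \<nu>) * \<alpha> (n - \<nu>) * inverse w ^ \<nu>))"
    by (simp add: A_star_def A_def atMost_atLeast0 sum_distrib_left)
  also have "\<dots> = (\<Sum>\<nu>=0..n. w powi k * (of_nat (n choose (n - \<nu>)) * \<alpha> (n - (n - \<nu>)) * inverse w ^ (n - \<nu>)))"
    by (subst sum.atLeastAtMost_rev) simp
  also have "\<dots> = (\<Sum>\<nu>=0..n. of_nat (n choose \<nu>) * \<alpha> \<nu> * w ^ \<nu> * w powi (k - int n))"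
  proof (intro sum.cong refl)
    fix \<nu> assume "\<nu> \<in> {0..n}"
    then have le: "\<nu> \<le> n" by simp
    have "w powi k * inverse w ^ (n - \<nu>) = w powi k * w powi (- int (n - \<nu>))"
      by (simp add: power_int_minus power_inverse)
    also have "\<dots> = w powi (k - int n + int \<nu>)"
      using assms le by (subst power_int_add[symmetric]) (auto simp: of_nat_diff algebra_simps)
    also have "\<dots> = w powi (k - int n) * w ^ \<nu>"
      using assms by (subst power_int_add) auto
    finally show "w powi k * (of_nat (n choose (n - \<nu>)) * \<alpha> (n - (n - \<nu>)) * inverse w ^ (n - \<nu>)) =
        of_nat (n choose \<nu>) * \<alpha> \<nu> * w ^ \<nu> * w powi (k - int n)"
      using le by (simp add: binomial_symmetric[OF le, symmetric] mult_ac)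
  qed
  finally show ?thesis
    by (simp add: poly_S_poly sum_distrib_right atMost_atLeast0)
qed

lemma fps_conv_radius_S_fps: "fps_conv_radius (S_fps \<alpha> n k) \<ge> 1"
proof -
  have "fps_conv_radius (S_fps \<alpha> n k) \<ge> min (fps_conv_radius (fps_of_poly (S_poly \<alpha> n)))
      (fps_conv_radius (fps_binomial (of_int (k - int n) :: complex)))"
    unfolding S_fps_def by (rule fps_conv_radius_mult)
  moreover have "fps_conv_radius (fps_binomial (of_int (k - int n) :: complex)) \<ge> 1"
    by (simp add: fps_conv_radius_binomial)
  ultimately show ?thesis
    by simp
qed

lemma eval_S_fps:
  assumes "norm z < 1"
  shows "eval_fps (S_fps \<alpha> n k) z = A_star \<alpha> n k (z + 1)"
proof -
  have "z + 1 \<noteq> 0"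
    using assms by (metis add_eq_0_iff norm_minus_cancel norm_one less_irrefl)
  have "eval_fps (S_fps \<alpha> n k) z = poly (S_poly \<alpha> n) z * (1 + z) powr (of_int (k - int n))"
    unfolding S_fps_def using assms
    by (subst eval_fps_mult) (auto simp: eval_fps_binomial fps_conv_radius_binomial)
  also have "\<dots> = A_star \<alpha> n k (z + 1)"
    using \<open>z + 1 \<noteq> 0\<close> complex_powr_of_int[of "1 + z" "k - int n"]
    by (simp add: A_star_eq_poly_S_poly add.commute)
  finally show ?thesis .
qed

lemma norm_less_fps_conv_radius_S_fps:
  assumes "norm x < 1"
  shows "ereal (norm x) < fps_conv_radius (S_fps \<alpha> n k)"
proof -
  from assms have "ereal (norm x) < 1"
    by simp
  then show ?thesis
    using fps_conv_radius_S_fps by (rule less_le_trans)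
qed

lemma sums_S_fps:
  assumes "norm x < 1"
  shows "(\<lambda>l. fps_nth (S_fps \<alpha> n k) l * x ^ l) sums A_star \<alpha> n k (x + 1)"
  using sums_eval_fps[OF norm_less_fps_conv_radius_S_fps[OF assms]] by (simp add: eval_S_fps assms)

lemma has_fps_expansion_A_star_at_1:
  "(A_star \<alpha> n k \<circ> (\<lambda>x. 1 + x)) has_fps_expansion S_fps \<alpha> n k"
proof -
  have "eventually (\<lambda>z::complex. z \<in> ball 0 1) (nhds 0)"
    by (intro eventually_nhds_in_open) auto
  moreover have "fps_conv_radius (S_fps \<alpha> n k) > 0"
    using norm_less_fps_conv_radius_S_fps[of 0 \<alpha> n k] by (simp add: zero_ereal_def)
  ultimately show ?thesis
    unfolding has_fps_expansion_def by (auto elim!: eventually_mono simp: eval_S_fps add.commute)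
qed

lemma fps_nth_S_fps_higher_deriv:
  "fps_nth (S_fps \<alpha> n k) l = (deriv ^^ l) (A_star \<alpha> n k) 1 / fact l"
  using fps_nth_fps_expansion[OF has_fps_expansion_A_star_at_1, of \<alpha> n k l]
    higher_deriv_shift_0[of l "A_star \<alpha> n k" 1]
  by simp

lemma coeff_S_poly: "\<nu> \<le> n \<Longrightarrow> coeff (S_poly \<alpha> n) \<nu> = s \<alpha> n \<nu>"
  by (simp add: S_poly_def coeff_sum coeff_monom)

lemma fps_nth_S_fps:
  "l \<le> n \<Longrightarrow> fps_nth (S_fps \<alpha> n k) l = (\<Sum>\<nu>\<le>l. (of_int (k - int n) gchoose (l - \<nu>)) * s \<alpha> n \<nu>)"
  unfolding S_fps_def fps_mult_nth atMost_atLeast0 by (intro sum.cong refl) (simp add: coeff_S_poly)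

lemma S_fps_eq_fps_of_poly:
  "S_fps \<alpha> n (int (n + m)) = fps_of_poly (S_poly \<alpha> n * [:1, 1:] ^ m)"
  by (simp add: S_fps_def fps_of_poly_mult fps_of_poly_power fps_binomial_of_nat
      fps_of_poly_pCons add.commute)

lemma poly_S_poly_mult_power:
  "x \<noteq> -1 \<Longrightarrow> poly (S_poly \<alpha> n * [:1, 1:] ^ m) x = A_star \<alpha> n (int (n + m)) (x + 1)"
  by (simp add: A_star_eq_poly_S_poly add_eq_0_iff add.commute)

lemma degree_S_poly_mult_power: "degree (S_poly \<alpha> n * [:1, 1:] ^ m) \<le> n + m"
proof -
  have "degree (S_poly \<alpha> n) \<le> n"
    unfolding S_poly_def by (intro degree_sum_le order_trans[OF degree_monom_le]) auto
  moreover have "degree ([:1, 1:] ^ m :: complex poly) \<le> m"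
    by (rule order_trans[OF degree_power_le]) simp
  ultimately show ?thesis
    by (meson add_mono degree_mult_le order_trans)
qed

lemma A_star_reflection:
  assumes "prop_R \<alpha>" "x \<noteq> 0" "x + 1 \<noteq> 0"
  shows "A_star \<alpha> n (int K) (inverse x + 1) = (-1) ^ n * inverse x ^ K * A_star \<alpha> n (int K) (x + 1)"
proof -
  have inverse_shift: "inverse (inverse x + 1) = 1 - inverse (x + 1)"
    using assms(2,3) by (simp add: field_simps)
  have shift: "inverse x + 1 = inverse x * (x + 1)"
    using assms(2) by (simp add: field_simps)
  have R: "A \<alpha> n (1 - inverse (x + 1)) = (-1) ^ n * A \<alpha> n (inverse (x + 1))"
    using assms(1) unfolding prop_R_def by blast
  have "A_star \<alpha> n (int K) (inverse x + 1) = (inverse x * (x + 1)) ^ K * A \<alpha> n (1 - inverse (x + 1))"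
    unfolding A_star_def inverse_shift by (simp add: shift)
  also have "\<dots> = (-1) ^ n * inverse x ^ K * ((x + 1) ^ K * A \<alpha> n (inverse (x + 1)))"
    by (simp add: R power_mult_distrib mult_ac)
  finally show ?thesis
    by (simp add: A_star_def)
qed

lemma S_poly_mult_power_quasi_palindromic:
  assumes "prop_R \<alpha>"
  shows "S_poly \<alpha> n * [:1, 1:] ^ m = smult ((-1) ^ n) (reciprocal_poly (n + m) (S_poly \<alpha> n * [:1, 1:] ^ m))"
proof (rule eq_smult_reciprocal_polyI_cofinite[OF degree_S_poly_mult_power, of "{-1}"])
  fix x :: complex
  assume "x \<noteq> 0" "x \<notin> {-1}"
  then have "x \<noteq> -1" "x + 1 \<noteq> 0" "inverse x \<noteq> -1"
    by (auto, metis eq_neg_iff_add_eq_0, metis inverse_minus_eq inverse_1 inverse_inverse_eq)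
  have "(-1) ^ n * x ^ (n + m) * poly (S_poly \<alpha> n * [:1, 1:] ^ m) (inverse x)
      = (-1) ^ n * x ^ (n + m) * ((-1) ^ n * inverse x ^ (n + m) * A_star \<alpha> n (int (n + m)) (x + 1))"
    using A_star_reflection[OF assms \<open>x \<noteq> 0\<close> \<open>x + 1 \<noteq> 0\<close>]
    by (simp only: poly_S_poly_mult_power[OF \<open>inverse x \<noteq> -1\<close>])
  also have "\<dots> = ((-1) * (-1)) ^ n * (x * inverse x) ^ (n + m) * A_star \<alpha> n (int (n + m)) (x + 1)"
    by (simp only: power_mult_distrib mult_ac)
  also have "\<dots> = poly (S_poly \<alpha> n * [:1, 1:] ^ m) x"
    using \<open>x \<noteq> 0\<close> poly_S_poly_mult_power[OF \<open>x \<noteq> -1\<close>] by simp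
  finally show "poly (S_poly \<alpha> n * [:1, 1:] ^ m) x
      = (-1) ^ n * x ^ (n + m) * poly (S_poly \<alpha> n * [:1, 1:] ^ m) (inverse x)"
    by (rule sym)
qed simp

theorem mainTheorem6:
  fixes \<alpha> :: "nat \<Rightarrow> complex" and n :: nat and k :: int
  shows
    "(\<forall>x::complex. norm x < 1 \<longrightarrow>
        (\<lambda>l. fps_nth (S_fps \<alpha> n k) l * x ^ l) sums A_star \<alpha> n k (x + 1))
   \<and> (k \<ge> int n \<longrightarrow>
        (\<exists>p. fps_of_poly p = S_fps \<alpha> n k
           \<and> (\<forall>x. x \<noteq> -1 \<longrightarrow> poly p x = A_star \<alpha> n k (x + 1))
           \<and> (prop_R \<alpha> \<longrightarrow>
                (\<forall>x. x \<noteq> 0 \<longrightarrow> poly p x = (-1) ^ n * x ^ nat k * poly p (inverse x)))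
           \<and> (prop_R \<alpha> \<and> odd n \<and> even k \<longrightarrow> coeff p (nat k div 2) = 0)))
   \<and> (\<forall>l::nat. l \<le> n \<and> int l \<le> k \<longrightarrow>
        fps_nth (S_fps \<alpha> n k) l = (deriv ^^ l) (A_star \<alpha> n k) 1 / fact l
      \<and> (deriv ^^ l) (A_star \<alpha> n k) 1 / fact l
          = (\<Sum>\<nu>\<le>l. (of_int (k - int n) gchoose (l - \<nu>)) * s \<alpha> n \<nu>))"
proof (intro conjI allI impI)
  show "(\<lambda>l. fps_nth (S_fps \<alpha> n k) l * x ^ l) sums A_star \<alpha> n k (x + 1)" if "norm x < 1" for x
    using that by (rule sums_S_fps)
next
  assume "k \<ge> int n"
  then obtain m where k: "k = int (n + m)"
    by (metis zle_iff_zadd of_nat_add)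
  then have nat_k: "nat k = n + m"
    by simp
  define p where "p = S_poly \<alpha> n * [:1, 1:] ^ m"
  have palindromic: "p = smult ((-1) ^ n) (reciprocal_poly (n + m) p)" if "prop_R \<alpha>"
    unfolding p_def by (rule S_poly_mult_power_quasi_palindromic[OF that])
  show "\<exists>p. fps_of_poly p = S_fps \<alpha> n k
           \<and> (\<forall>x. x \<noteq> -1 \<longrightarrow> poly p x = A_star \<alpha> n k (x + 1))
           \<and> (prop_R \<alpha> \<longrightarrow>
                (\<forall>x. x \<noteq> 0 \<longrightarrow> poly p x = (-1) ^ n * x ^ nat k * poly p (inverse x)))
           \<and> (prop_R \<alpha> \<and> odd n \<and> even k \<longrightarrow> coeff p (nat k div 2) = 0)"
  proof (intro exI conjI allI impI)
    show "fps_of_poly p = S_fps \<alpha> n k"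
      unfolding p_def k by (rule S_fps_eq_fps_of_poly[symmetric])
    show "poly p x = A_star \<alpha> n k (x + 1)" if "x \<noteq> -1" for x
      unfolding p_def k by (rule poly_S_poly_mult_power[OF that])
    show "poly p x = (-1) ^ n * x ^ nat k * poly p (inverse x)" if "prop_R \<alpha>" "x \<noteq> 0" for x
      unfolding nat_k using palindromic[OF \<open>prop_R \<alpha>\<close>] degree_S_poly_mult_power \<open>x \<noteq> 0\<close>
      unfolding p_def by (rule poly_eq_smult_reciprocal_poly)
  next
    assume "prop_R \<alpha> \<and> odd n \<and> even k"
    then have "p = - reciprocal_poly (n + m) p" "even (n + m)"
      using palindromic unfolding k by auto
    then show "coeff p (nat k div 2) = 0"
      unfolding nat_k by (rule coeff_middle_eq_0_if_anti_reciprocal)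
  qed
next
  fix l :: nat
  show "fps_nth (S_fps \<alpha> n k) l = (deriv ^^ l) (A_star \<alpha> n k) 1 / fact l"
    by (rule fps_nth_S_fps_higher_deriv)
  assume "l \<le> n \<and> int l \<le> k"
  then show "(deriv ^^ l) (A_star \<alpha> n k) 1 / fact l
      = (\<Sum>\<nu>\<le>l. (of_int (k - int n) gchoose (l - \<nu>)) * s \<alpha> n \<nu>)"
    by (simp flip: fps_nth_S_fps_higher_deriv add: fps_nth_S_fps)
qed

end
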